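(* Let $\Gamma=(G,\sigma)$ be a signed graph with $G=(V,E)$, $|V|=n$, with edge weight $w\equiv1$, vertex measure $\mu\equiv1$ and potential $\kappa\equiv0$. Then $(L_1(\Gamma),\dots,L_n(\Gamma))=(0,\dots,0)$ if and only if $E=\emptyset$.
   Context: $G=(V,E)$ is a finite undirected graph without self-loops, $V=\{1,\dots,n\}$; $\sigma:E\to\{\pm1\}$, $\sigma_{ij}=\sigma(\{i,j\})$. For $p\ge1$ and nonzero $f$, $\mathcal R_p^\sigma(f)=\frac{\sum_{\{i,j\}\in E}|f(i)-\sigma_{ij}f(j)|^p}{\sum_i|f(i)|^p}$; $\mathcal S_p=\{f:\sum_i|f(i)|^p=1\}$; Krasnoselskii genus $\gamma(B)$ of closed symmetric $B\subset\mathbb R^n\setminus\{0\}$: least $k$ with an odd continuous map $B\to\mathbb R^k\setminus\{0\}$; $\mathcal F_k(\mathcal S_p)$ = closed symmetric $B\subset\mathcal S_p$ with $\gamma(B)\ge k$; $\lambda_k^{(p)}=\min_{B\in\mathcal F_k(\mathcal S_p)}\max_{f\in B}\mathcal R_p^\sigma(f)$. Cut-off adjacency eigenvalues: $L_k(\Gamma):=\lim_{p\to\infty}2^{-p}\lambda_k^{(p)}(\Gamma)$ (the limits exist). *)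

theory Defs
  imports "HOL-Analysis.Analysis"
begin

text \<open>Vertices are the elements of a finite type 'n (so n = CARD('n)); a function
  f : V -> R is a vector in real^'n.\<close>

definition signed_graph :: "'n::finite set set \<Rightarrow> ('n set \<Rightarrow> real) \<Rightarrow> bool" where
  "signed_graph E \<sigma> \<longleftrightarrow> (\<forall>e\<in>E. \<exists>i j. i \<noteq> j \<and> e = {i, j}) \<and> (\<forall>e\<in>E. \<sigma> e = 1 \<or> \<sigma> e = -1)"

text \<open>Numerator: sum over edges {i,j} of |f(i) - sigma_ij f(j)|^p.  Each unordered edge
  is visited twice as an ordered pair (with identical term, since sigma = +-1),
  hence the factor 1/2.\<close>
definition edge_energy :: "'n::finite set set \<Rightarrow> ('n set \<Rightarrow> real) \<Rightarrow> real \<Rightarrow> real^'n \<Rightarrow> real" where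
  "edge_energy E \<sigma> p f =
     (1/2) * (\<Sum>i\<in>UNIV. \<Sum>j\<in>UNIV. if {i, j} \<in> E then \<bar>f$i - \<sigma> {i, j} * f$j\<bar> powr p else 0)"

definition pnorm_p :: "real \<Rightarrow> real^'n::finite \<Rightarrow> real" where
  "pnorm_p p f = (\<Sum>i\<in>UNIV. \<bar>f$i\<bar> powr p)"

definition rayleigh :: "'n::finite set set \<Rightarrow> ('n set \<Rightarrow> real) \<Rightarrow> real \<Rightarrow> real^'n \<Rightarrow> real" where
  "rayleigh E \<sigma> p f = edge_energy E \<sigma> p f / pnorm_p p f"

definition sphere_p :: "real \<Rightarrow> (real^'n::finite) set" where
  "sphere_p p = {f. pnorm_p p f = 1}"

text \<open>Odd continuous map B -> R^k \ {0}, with R^k represented by its k coordinate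
  functions (indices 0..k-1).\<close>
definition odd_map_to :: "(real^'n::finite) set \<Rightarrow> nat \<Rightarrow> bool" where
  "odd_map_to B k \<longleftrightarrow> (\<exists>g :: real^'n \<Rightarrow> nat \<Rightarrow> real.
       (\<forall>i<k. continuous_on B (\<lambda>x. g x i)) \<and>
       (\<forall>x\<in>B. \<forall>i<k. g (-x) i = - g x i) \<and>
       (\<forall>x\<in>B. \<exists>i<k. g x i \<noteq> 0))"

definition genus :: "(real^'n::finite) set \<Rightarrow> nat" where
  "genus B = (LEAST k. odd_map_to B k)"

definition symmetric_set :: "(real^'n::finite) set \<Rightarrow> bool" where
  "symmetric_set B \<longleftrightarrow> (\<forall>x\<in>B. -x \<in> B)"

definition genus_family :: "real \<Rightarrow> nat \<Rightarrow> (real^'n::finite) set set" where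
  "genus_family p k = {B. B \<subseteq> sphere_p p \<and> closed B \<and> symmetric_set B \<and> genus B \<ge> k}"

text \<open>Min-max eigenvalue; min/max written as Inf/Sup (they are attained).\<close>
definition p_eigenvalue :: "'n::finite set set \<Rightarrow> ('n set \<Rightarrow> real) \<Rightarrow> real \<Rightarrow> nat \<Rightarrow> real" where
  "p_eigenvalue E \<sigma> p k =
     (INF B \<in> (genus_family p k :: (real^'n) set set). SUP f \<in> B. rayleigh E \<sigma> p f)"

end

theory Submission
  imports Defs "HOL-Homology.Homology"
begin

text \<open>If E = {}, every Rayleigh quotient vanishes, so \<lambda>_k^(p) = 0 for 1 \<le> k \<le> n.
  If {a, b} \<in> E, let v = e_a - \<sigma>_ab e_b. A closed symmetric subset of the p-sphere that
  misses the line through v has the odd map x \<mapsto> (x_j - v_j x_a)_(j \<noteq> a) into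
  R^(n-1) - {0}; so every set of genus n meets this line, on which the Rayleigh quotient
  equals 2^(p-1). Hence \<lambda>_n^(p) \<ge> 2^(p-1), i.e. 2^(-p) \<lambda>_n^(p) \<ge> 1/2.

  This presupposes that sets of genus n exist, i.e. that the p-sphere has genus n: the
  Borsuk--Ulam theorem. It follows from the fact that an odd self-map of S^k has odd Brouwer
  degree, by induction on k: smoothing the map and Sard's lemma give a point missed by the
  image of the equator; a reflection moves that point to the pole, and a homotopy pushing the
  image of the equator away from the poles makes the map preserve the equator, where
  \<open>Borsuk_odd_mapping_degree_step\<close> compares the degrees in dimensions k and k - 1.\<close>

section \<open>Standard spheres\<close>

definition std_sphere :: "nat \<Rightarrow> (nat \<Rightarrow> real) set" where
  "std_sphere k = {x. (\<Sum>i\<le>k. (x i)\<^sup>2) = 1 \<and> (\<forall>i>k. x i = 0)}"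

lemma nsphere_eq_top_of_set: "nsphere k = top_of_set (std_sphere k)"
  unfolding nsphere std_sphere_def euclidean_product_topology ..

lemma topspace_nsphere_eq [simp]: "topspace (nsphere k) = std_sphere k"
  by (simp add: nsphere_eq_top_of_set)

lemma continuous_map_nsphere_iff:
  "continuous_map (nsphere k) (nsphere k) f \<longleftrightarrow>
     continuous_on (std_sphere k) f \<and> f \<in> std_sphere k \<rightarrow> std_sphere k"
  by (simp add: nsphere_eq_top_of_set)

lemma std_sphere_mono: "std_sphere m \<subseteq> std_sphere (Suc m)"
  by (auto simp: std_sphere_def)

lemma odd_Brouwer_degree2_of_odd_map_0:
  assumes cont: "continuous_map (nsphere 0) (nsphere 0) f"
    and odd_f: "\<And>x. x \<in> std_sphere 0 \<Longrightarrow> f (- x) = - f x"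
  shows "odd (Brouwer_degree2 0 f)"
proof -
  define e :: "nat \<Rightarrow> real" where "e i = (if i = 0 then 1 else 0)" for i
  have "x \<in> std_sphere 0 \<longleftrightarrow> x = e \<or> x = - e" for x
  proof
    assume "x \<in> std_sphere 0"
    then have "x 0 = 1 \<or> x 0 = -1" "\<forall>i>0. x i = 0"
      by (auto simp: std_sphere_def power2_eq_1_iff)
    then show "x = e \<or> x = - e"
      by (auto simp: e_def fun_eq_iff)
  qed (auto simp: e_def std_sphere_def)
  then have S0: "std_sphere 0 = {e, - e}"
    by auto
  then have fe: "f e = e \<or> f e = - e"
    using cont by (auto simp: continuous_map_nsphere_iff)
  have f_neg_e: "f (- e) = - f e"
    using odd_f S0 by simp
  from fe show ?thesis
  proof
    assume "f e = e"
    then have "Brouwer_degree2 0 f = Brouwer_degree2 0 id"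
      using f_neg_e by (intro Brouwer_degree2_eq) (auto simp: S0)
    then show ?thesis by simp
  next
    assume "f e = - e"
    then have "f x = - x" if "x \<in> std_sphere 0" for x
      using that f_neg_e by (auto simp: S0)
    moreover have "- x = (\<lambda>i. if i = 0 then - x i else x i)" if "x \<in> std_sphere 0" for x
      using that by (auto simp: S0 e_def)
    ultimately have "Brouwer_degree2 0 f = Brouwer_degree2 0 (\<lambda>x i. if i = 0 then - x i else x i)"
      by (intro Brouwer_degree2_eq) simp
    then show ?thesis
      by (simp add: Brouwer_degree2_reflection)
  qed
qed

section \<open>Coordinate spheres in \<open>real^'n\<close>\<close>

definition nth_elem :: "nat \<Rightarrow> 'n::finite" where
  "nth_elem = (SOME h. bij_betw h {..<CARD('n)} UNIV)"

definition elem_index :: "'n::finite \<Rightarrow> nat" where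
  "elem_index = inv_into {..<CARD('n)} nth_elem"

lemma bij_betw_nth_elem: "bij_betw (nth_elem :: nat \<Rightarrow> 'n::finite) {..<CARD('n)} UNIV"
proof -
  have "\<exists>h. bij_betw (h :: nat \<Rightarrow> 'n) {..<CARD('n)} UNIV"
    using ex_bij_betw_nat_finite[of "UNIV :: 'n set"] by (simp add: atLeast0LessThan)
  then show ?thesis
    unfolding nth_elem_def by (rule someI_ex)
qed

lemma elem_index_less: "elem_index (j :: 'n::finite) < CARD('n)"
  using bij_betw_nth_elem[where 'n='n] unfolding elem_index_def
  by (metis bij_betw_def inv_into_into lessThan_iff UNIV_I)

lemma nth_elem_index [simp]: "nth_elem (elem_index j) = j"
  using bij_betw_nth_elem unfolding elem_index_def
  by (meson bij_betw_inv_into_right UNIV_I)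

lemma elem_index_nth [simp]: "i < CARD('n) \<Longrightarrow> elem_index (nth_elem i :: 'n::finite) = i"
  using bij_betw_nth_elem[where 'n='n] unfolding elem_index_def
  by (simp add: bij_betw_inv_into_left)

definition vec_of_seq :: "(nat \<Rightarrow> real) \<Rightarrow> real^'n::finite" where
  "vec_of_seq x = (\<chi> j. x (elem_index j))"

definition seq_of_vec :: "real^'n::finite \<Rightarrow> nat \<Rightarrow> real" where
  "seq_of_vec y i = (if i < CARD('n) then y $ nth_elem i else 0)"

definition seq_map :: "(real^'n::finite \<Rightarrow> real^'n) \<Rightarrow> (nat \<Rightarrow> real) \<Rightarrow> nat \<Rightarrow> real" where
  "seq_map F = seq_of_vec \<circ> F \<circ> vec_of_seq"

definition coord_subspace :: "nat \<Rightarrow> (real^'n::finite) set" where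
  "coord_subspace k = {y. \<forall>j. k < elem_index j \<longrightarrow> y $ j = 0}"

lemma vec_of_seq_seq_of_vec [simp]: "vec_of_seq (seq_of_vec y) = y"
  by (simp add: vec_of_seq_def seq_of_vec_def elem_index_less vec_eq_iff)

lemma seq_of_vec_vec_of_seq:
  assumes "x \<in> std_sphere k" "k < CARD('n::finite)"
  shows "seq_of_vec (vec_of_seq x :: real^'n) = x"
  using assms by (auto simp: seq_of_vec_def vec_of_seq_def std_sphere_def fun_eq_iff)

lemma vec_of_seq_uminus: "vec_of_seq (- x) = - vec_of_seq x"
  by (simp add: vec_of_seq_def vec_eq_iff)

lemma seq_of_vec_uminus: "seq_of_vec (- y) = - seq_of_vec y"
  by (simp add: seq_of_vec_def fun_eq_iff)

lemma continuous_on_vec_of_seq: "continuous_on S vec_of_seq"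
proof -
  have "continuous_on S (\<lambda>x::nat \<Rightarrow> real. x i)" for i
    by (rule continuous_on_subset[OF continuous_on_product_coordinates]) simp
  then show ?thesis
    unfolding vec_of_seq_def by (intro continuous_intros)
qed

lemma continuous_on_seq_of_vec: "continuous_on S (seq_of_vec :: real^'n::finite \<Rightarrow> _)"
  unfolding seq_of_vec_def[abs_def]
proof (intro continuous_on_coordinatewise_then_product)
  fix i
  show "continuous_on S (\<lambda>y::real^'n. if i < CARD('n) then y $ nth_elem i else 0)"
    by (cases "i < CARD('n)") (simp_all add: continuous_intros)
qed

lemma subspace_coord_subspace: "subspace (coord_subspace k)"
  by (auto simp: subspace_def coord_subspace_def)

lemma coord_subspace_mono: "j \<le> k \<Longrightarrow> coord_subspace j \<subseteq> coord_subspace k"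
  by (auto simp: coord_subspace_def)

lemma coord_subspace_Suc:
  assumes "Suc m < CARD('n::finite)"
  shows "(coord_subspace m :: (real^'n) set) =
           coord_subspace (Suc m) \<inter> {y. y $ nth_elem (Suc m) = 0}"
  using assms by (auto simp: coord_subspace_def) (metis Suc_lessI nth_elem_index)

lemma dim_coord_subspace_less:
  assumes "Suc m < CARD('n::finite)"
  shows "dim (coord_subspace m :: (real^'n) set) < dim (coord_subspace (Suc m) :: (real^'n) set)"
proof (rule dim_psubset)
  let ?e = "axis (nth_elem (Suc m)) 1 :: real^'n"
  have "?e \<in> coord_subspace (Suc m)" "?e \<notin> coord_subspace m"
    using assms by (auto simp: coord_subspace_def axis_def)
  moreover have span_eq: "span (coord_subspace j) = (coord_subspace j :: (real^'n) set)" for j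
    by (simp add: subspace_coord_subspace)
  ultimately show "span (coord_subspace m) \<subset> span (coord_subspace (Suc m) :: (real^'n) set)"
    unfolding span_eq using coord_subspace_mono[of m "Suc m"] by auto
qed

lemma norm_power2_eq_sum_seq_of_vec:
  "(norm (y :: real^'n::finite))\<^sup>2 = (\<Sum>i<CARD('n). (seq_of_vec y i)\<^sup>2)"
proof -
  have "(norm y)\<^sup>2 = (\<Sum>j\<in>UNIV. (y $ j)\<^sup>2)"
    unfolding power2_norm_eq_inner inner_vec_def by (simp add: power2_eq_square)
  also have "\<dots> = (\<Sum>i<CARD('n). (y $ nth_elem i)\<^sup>2)"
    by (rule sum.reindex_bij_betw[OF bij_betw_nth_elem, symmetric])
  finally show ?thesis
    by (simp add: seq_of_vec_def)
qed

lemma sum_lessThan_eq_sum_atMost: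
  fixes x :: "nat \<Rightarrow> real"
  assumes "k < n" "\<And>i. k < i \<Longrightarrow> x i = 0"
  shows "(\<Sum>i<n. x i) = (\<Sum>i\<le>k. x i)"
proof (rule sum.mono_neutral_right)
  show "\<forall>i\<in>{..<n} - {..k}. x i = 0"
  proof
    fix i assume "i \<in> {..<n} - {..k}"
    then show "x i = 0" by (intro assms(2)) auto
  qed
qed (use assms(1) in auto)

lemma vec_of_seq_in_sphere:
  assumes x: "x \<in> std_sphere k" and k: "k < CARD('n::finite)"
  shows "(vec_of_seq x :: real^'n) \<in> sphere 0 1 \<inter> coord_subspace k"
proof -
  have "(norm (vec_of_seq x :: real^'n))\<^sup>2 = (\<Sum>i\<le>k. (x i)\<^sup>2)"
    using x k unfolding norm_power2_eq_sum_seq_of_vec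
    by (subst sum_lessThan_eq_sum_atMost[OF k])
       (auto simp: seq_of_vec_vec_of_seq std_sphere_def)
  then have "norm (vec_of_seq x :: real^'n) = 1"
    using x by (simp add: std_sphere_def abs_square_eq_1)
  moreover have "(vec_of_seq x :: real^'n) \<in> coord_subspace k"
    using x by (simp add: coord_subspace_def vec_of_seq_def std_sphere_def)
  ultimately show ?thesis by simp
qed

lemma seq_of_vec_in_std_sphere:
  assumes y: "y \<in> sphere 0 1 \<inter> coord_subspace k" and k: "k < CARD('n::finite)"
  shows "seq_of_vec (y :: real^'n) \<in> std_sphere k"
proof -
  have zero: "seq_of_vec y i = 0" if "k < i" for i
    using y that by (auto simp: seq_of_vec_def coord_subspace_def)
  have "(\<Sum>i\<le>k. (seq_of_vec y i)\<^sup>2) = (norm y)\<^sup>2"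
    unfolding norm_power2_eq_sum_seq_of_vec using zero
    by (intro sum_lessThan_eq_sum_atMost[symmetric] k) simp
  then show ?thesis
    using y zero by (simp add: std_sphere_def)
qed

lemma continuous_map_vec_of_seq:
  assumes "k < CARD('n::finite)"
  shows "continuous_map (nsphere k) (top_of_set (sphere 0 1 \<inter> coord_subspace k))
           (vec_of_seq :: _ \<Rightarrow> real^'n)"
  using vec_of_seq_in_sphere[OF _ assms]
  by (auto simp: nsphere_eq_top_of_set continuous_on_vec_of_seq)

lemma continuous_map_seq_of_vec:
  assumes "k < CARD('n::finite)"
  shows "continuous_map (top_of_set (sphere 0 1 \<inter> coord_subspace k)) (nsphere k)
           (seq_of_vec :: real^'n \<Rightarrow> _)"
  using seq_of_vec_in_std_sphere[OF _ assms]
  by (auto simp: nsphere_eq_top_of_set continuous_on_seq_of_vec)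

lemma continuous_map_seq_map:
  fixes F :: "real^'n::finite \<Rightarrow> real^'n"
  assumes "k < CARD('n)" "continuous_on (sphere 0 1 \<inter> coord_subspace k) F"
    "F \<in> sphere 0 1 \<inter> coord_subspace k \<rightarrow> sphere 0 1 \<inter> coord_subspace k"
  shows "continuous_map (nsphere k) (nsphere k) (seq_map F)"
proof -
  have "continuous_map (nsphere k) (top_of_set (sphere 0 1 \<inter> coord_subspace k)) (F \<circ> vec_of_seq)"
    by (rule continuous_map_compose[OF continuous_map_vec_of_seq[OF assms(1)]]) (simp add: assms)
  then have "continuous_map (nsphere k) (nsphere k) (seq_of_vec \<circ> (F \<circ> vec_of_seq))"
    by (rule continuous_map_compose[OF _ continuous_map_seq_of_vec[OF assms(1)]])
  then show ?thesis
    by (simp add: seq_map_def o_assoc)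
qed

lemma homotopic_seq_map:
  fixes F G :: "real^'n::finite \<Rightarrow> real^'n"
  assumes "k < CARD('n)"
    and "homotopic_with_canon (\<lambda>_. True)
           (sphere 0 1 \<inter> coord_subspace k) (sphere 0 1 \<inter> coord_subspace k) F G"
  shows "homotopic_with (\<lambda>_. True) (nsphere k) (nsphere k) (seq_map F) (seq_map G)"
proof -
  have "homotopic_with (\<lambda>_. True) (nsphere k) (top_of_set (sphere 0 1 \<inter> coord_subspace k))
          (F \<circ> vec_of_seq) (G \<circ> vec_of_seq)"
    by (rule homotopic_with_compose_continuous_map_right[OF assms(2)
          continuous_map_vec_of_seq[OF assms(1)]]) simp
  then have "homotopic_with (\<lambda>_. True) (nsphere k) (nsphere k)
               (seq_of_vec \<circ> (F \<circ> vec_of_seq)) (seq_of_vec \<circ> (G \<circ> vec_of_seq))"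
    by (rule homotopic_with_compose_continuous_map_left[OF _
          continuous_map_seq_of_vec[OF assms(1)]]) simp
  then show ?thesis
    by (simp add: seq_map_def o_assoc)
qed

lemma seq_map_compose: "seq_map (R \<circ> G) = seq_map R \<circ> seq_map G"
  by (simp add: seq_map_def fun_eq_iff)

lemma seq_map_in_std_sphere:
  assumes "k < CARD('n::finite)" "H \<in> sphere 0 1 \<inter> coord_subspace k \<rightarrow> sphere 0 1 \<inter> coord_subspace k"
  shows "seq_map (H :: real^'n \<Rightarrow> real^'n) \<in> std_sphere k \<rightarrow> std_sphere k"
proof
  fix x assume "x \<in> std_sphere k"
  then have "H (vec_of_seq x) \<in> sphere 0 1 \<inter> coord_subspace k"
    using assms(2) vec_of_seq_in_sphere[OF _ assms(1)] by blast
  then show "seq_map H x \<in> std_sphere k"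
    unfolding seq_map_def o_def by (rule seq_of_vec_in_std_sphere[OF _ assms(1)])
qed

lemma seq_map_uminus:
  fixes H :: "real^'n::finite \<Rightarrow> real^'n"
  assumes "k < CARD('n)" "\<And>y. y \<in> sphere 0 1 \<inter> coord_subspace k \<Longrightarrow> H (- y) = - H y"
    and "x \<in> std_sphere k"
  shows "seq_map H (- x) = - seq_map H x"
  using assms(2)[OF vec_of_seq_in_sphere[OF assms(3,1)]]
  by (simp add: seq_map_def vec_of_seq_uminus seq_of_vec_uminus)

lemma odd_nsphere_map_eq_seq_map:
  assumes k: "k < CARD('n::finite)" and f: "continuous_map (nsphere k) (nsphere k) f"
    and odd_f: "\<And>x. x \<in> std_sphere k \<Longrightarrow> f (- x) = - f x"
  obtains F :: "real^'n \<Rightarrow> real^'n"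
  where "continuous_on (sphere 0 1 \<inter> coord_subspace k) F"
    "F \<in> sphere 0 1 \<inter> coord_subspace k \<rightarrow> sphere 0 1 \<inter> coord_subspace k"
    "\<And>y. y \<in> sphere 0 1 \<inter> coord_subspace k \<Longrightarrow> F (- y) = - F y"
    "\<And>x. x \<in> std_sphere k \<Longrightarrow> seq_map F x = f x"
proof -
  let ?S = "sphere 0 1 \<inter> coord_subspace k :: (real^'n) set"
  define F :: "real^'n \<Rightarrow> real^'n" where "F = vec_of_seq \<circ> f \<circ> seq_of_vec"
  have cont_f: "continuous_on (std_sphere k) f" and f_in: "f \<in> std_sphere k \<rightarrow> std_sphere k"
    using f by (simp_all add: continuous_map_nsphere_iff)
  have seq_of_vec_S: "seq_of_vec y \<in> std_sphere k" if "y \<in> ?S" for y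
    using seq_of_vec_in_std_sphere[OF that k] .
  show thesis
  proof (rule that)
    show "continuous_on ?S F"
      unfolding F_def using seq_of_vec_S
      by (intro continuous_on_compose continuous_on_vec_of_seq continuous_on_seq_of_vec
          continuous_on_subset[OF cont_f]) auto
    show "F \<in> ?S \<rightarrow> ?S"
      unfolding F_def using seq_of_vec_S f_in vec_of_seq_in_sphere[OF _ k] by fastforce
    show "F (- y) = - F y" if "y \<in> ?S" for y
      unfolding F_def o_def seq_of_vec_uminus odd_f[OF seq_of_vec_S[OF that]] vec_of_seq_uminus ..
    show "seq_map F x = f x" if "x \<in> std_sphere k" for x
      using seq_of_vec_vec_of_seq[OF that k] seq_of_vec_vec_of_seq[OF funcset_mem[OF f_in that] k]
      by (simp add: seq_map_def F_def)
  qed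
qed

lemma axis_in_coord_sphere:
  assumes "k < CARD('n::finite)"
  shows "(axis (nth_elem k) 1 :: real^'n) \<in> sphere 0 1 \<inter> coord_subspace k"
proof -
  have "(axis (nth_elem k) 1 :: real^'n) \<in> coord_subspace k"
    using assms by (auto simp: coord_subspace_def axis_def)
  then show ?thesis
    by simp
qed

section \<open>Deforming odd maps of spheres\<close>

lemma zero_notin_closed_segment_near_unit:
  fixes a b :: "'a::real_normed_vector"
  assumes "norm a = 1" "norm (a - b) < 1"
  shows "0 \<notin> closed_segment a b"
proof
  assume "0 \<in> closed_segment a b"
  then obtain u where u: "0 \<le> u" "u \<le> 1" "(1 - u) *\<^sub>R a + u *\<^sub>R b = 0"
    by (auto simp: in_segment)
  then have "a = u *\<^sub>R (a - b)"
    by (simp add: algebra_simps eq_neg_iff_add_eq_0)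
  then have "norm a \<le> norm (a - b)"
    using u by (metis norm_scaleR abs_of_nonneg mult_left_le_one_le norm_ge_zero)
  then show False
    using assms by simp
qed

lemma homotopic_with_normalized_segment:
  fixes F g :: "'a::topological_space \<Rightarrow> 'b::real_normed_vector"
  assumes T: "subspace T" and contF: "continuous_on S F" and contg: "continuous_on S g"
    and F: "F \<in> S \<rightarrow> sphere 0 1 \<inter> T" and g: "g \<in> S \<rightarrow> T"
    and seg: "\<And>y. y \<in> S \<Longrightarrow> 0 \<notin> closed_segment (F y) (g y)"
  shows "homotopic_with_canon (\<lambda>_. True) S (sphere 0 1 \<inter> T) F (\<lambda>y. g y /\<^sub>R norm (g y))"
proof -
  have "closed_segment (F y) (g y) \<subseteq> T - {0}" if "y \<in> S" for y
    using F g seg[OF that] that closed_segment_subset[OF _ _ subspace_imp_convex[OF T]] by blast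
  then have "homotopic_with_canon (\<lambda>_. True) S (T - {0}) F g"
    by (intro homotopic_with_linear contF contg)
  then have "homotopic_with_canon (\<lambda>_. True) S (sphere 0 1 \<inter> T)
               ((\<lambda>z. z /\<^sub>R norm z) \<circ> F) ((\<lambda>z. z /\<^sub>R norm z) \<circ> g)"
    by (rule homotopic_with_compose_continuous_left)
       (auto intro!: continuous_intros simp: subspace_scale[OF T])
  then show ?thesis
    by (rule homotopic_with_eq) (use F in \<open>auto simp: Pi_iff\<close>)
qed

lemma odd_sphere_map_homotopic_differentiable:
  fixes F :: "'a::euclidean_space \<Rightarrow> 'b::euclidean_space"
  assumes S: "compact S" "\<And>y. y \<in> S \<Longrightarrow> - y \<in> S" and T: "subspace T"
    and contF: "continuous_on S F" and F: "F \<in> S \<rightarrow> sphere 0 1 \<inter> T"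
    and odd_F: "\<And>y. y \<in> S \<Longrightarrow> F (- y) = - F y"
  obtains G where "G differentiable_on S" "\<And>y. G (- y) = - G y"
    "homotopic_with_canon (\<lambda>_. True) S (sphere 0 1 \<inter> T) F G"
proof -
  obtain g where g: "polynomial_function g" "g ` S \<subseteq> T"
    and gF: "\<And>y. y \<in> S \<Longrightarrow> norm (F y - g y) < 1/2"
    using Stone_Weierstrass_polynomial_function_subspace[OF S(1) contF _ T, of "1/2"] F by auto
  define h where "h y = (1/2) *\<^sub>R (g y - g (- y))" for y
  have poly_h: "polynomial_function h"
    unfolding h_def using g(1)
    by (intro polynomial_function_cmul polynomial_function_diff
        polynomial_function_compose[where g=g,
          OF polynomial_function_minus[OF polynomial_function_id], unfolded o_def])
  have hT: "h \<in> S \<rightarrow> T"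
    using g(2) S(2) unfolding h_def by (auto intro!: subspace_scale subspace_diff T)
  have h_odd: "h (- y) = - h y" for y
    by (simp add: h_def algebra_simps)
  \<comment> \<open>averaging over the antipodes keeps the approximation, since F is odd\<close>
  have hF: "norm (F y - h y) < 1/2" if "y \<in> S" for y
  proof -
    have "F y - h y = (1/2) *\<^sub>R ((F y - g y) - (F (- y) - g (- y)))"
      unfolding h_def using odd_F[OF that] by (simp add: algebra_simps, simp flip: scaleR_add_left)
    then have "norm (F y - h y) \<le> (1/2) * (norm (F y - g y) + norm (F (- y) - g (- y)))"
      by (simp add: norm_triangle_ineq4)
    also have "\<dots> < 1/2"
      using gF[OF that] gF[OF S(2)[OF that]] by simp
    finally show ?thesis .
  qed
  have seg: "0 \<notin> closed_segment (F y) (h y)" if "y \<in> S" for y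
    using F hF[OF that] that by (intro zero_notin_closed_segment_near_unit) auto
  then have h0: "h y \<noteq> 0" if "y \<in> S" for y
    using that ends_in_segment(2) by metis
  have dh: "h differentiable_on S"
    by (rule differentiable_on_polynomial_function[OF poly_h])
  show thesis
  proof
    have "(\<lambda>y. norm (h y)) differentiable_on S"
      by (rule differentiable_on_compose[OF dh differentiable_on_norm]) (use h0 in auto)
    then have "(\<lambda>y. inverse (norm (h y))) differentiable_on S"
      by (rule differentiable_on_inverse) (use h0 in auto)
    then show "(\<lambda>y. h y /\<^sub>R norm (h y)) differentiable_on S"
      by (rule differentiable_on_scaleR[OF _ dh])
    show "h (- y) /\<^sub>R norm (h (- y)) = - (h y /\<^sub>R norm (h y))" for y
      by (simp add: h_odd)
    show "homotopic_with_canon (\<lambda>_. True) S (sphere 0 1 \<inter> T) F (\<lambda>y. h y /\<^sub>R norm (h y))"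
      by (intro homotopic_with_normalized_segment T contF F hT seg
          differentiable_imp_continuous_on dh)
  qed
qed

text \<open>For \<open>u = 0\<close> this is the identity, as division by zero yields zero.\<close>

definition hyperplane_reflection :: "'a::real_inner \<Rightarrow> 'a \<Rightarrow> 'a" where
  "hyperplane_reflection u x = x - (2 * (u \<bullet> x) / (u \<bullet> u)) *\<^sub>R u"

lemma hyperplane_reflection_uminus: "hyperplane_reflection u (- x) = - hyperplane_reflection u x"
  by (simp add: hyperplane_reflection_def)

lemma continuous_on_hyperplane_reflection: "continuous_on S (hyperplane_reflection u)"
  unfolding hyperplane_reflection_def by (cases "u = 0") (auto intro!: continuous_intros)

lemma inner_hyperplane_reflection: "u \<bullet> hyperplane_reflection u x = - (u \<bullet> x)"
  by (cases "u = 0") (simp_all add: hyperplane_reflection_def inner_diff_right)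

lemma hyperplane_reflection_involution:
  "hyperplane_reflection u (hyperplane_reflection u x) = x"
proof -
  have "hyperplane_reflection u (hyperplane_reflection u x) =
          hyperplane_reflection u x + (2 * (u \<bullet> x) / (u \<bullet> u)) *\<^sub>R u"
    unfolding hyperplane_reflection_def[of u "hyperplane_reflection u x"]
    by (simp add: inner_hyperplane_reflection)
  then show ?thesis
    by (simp add: hyperplane_reflection_def)
qed

lemma norm_hyperplane_reflection: "norm (hyperplane_reflection u x) = norm x"
proof (cases "u = 0")
  case False
  define c where "c = 2 * (u \<bullet> x) / (u \<bullet> u)"
  have "c * c * (u \<bullet> u) = 2 * c * (u \<bullet> x)"
    using False by (simp add: c_def)
  then have "(norm (x - c *\<^sub>R u))\<^sup>2 = (norm x)\<^sup>2"
    by (simp add: power2_norm_eq_inner inner_diff_left inner_diff_right inner_commute algebra_simps)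
  then show ?thesis
    by (simp add: hyperplane_reflection_def c_def power2_eq_iff_nonneg)
qed (simp add: hyperplane_reflection_def)

lemma hyperplane_reflection_in_sphere_subspace:
  "subspace T \<Longrightarrow> u \<in> T \<Longrightarrow> x \<in> sphere 0 1 \<inter> T \<Longrightarrow>
     hyperplane_reflection u x \<in> sphere 0 1 \<inter> T"
  by (simp add: norm_hyperplane_reflection)
     (simp add: hyperplane_reflection_def subspace_diff subspace_scale)

lemma hyperplane_reflection_swap:
  assumes "norm v = norm w"
  shows "hyperplane_reflection (v - w) v = w"
proof (cases "v = w")
  case False
  have "v \<bullet> v = w \<bullet> w"
    using assms by (simp add: dot_square_norm)
  then have "(v - w) \<bullet> (v - w) = 2 * ((v - w) \<bullet> v)"
    by (simp add: inner_diff_left inner_diff_right inner_commute)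
  moreover have "(v - w) \<bullet> (v - w) \<noteq> 0"
    using False by simp
  ultimately show ?thesis
    by (simp add: hyperplane_reflection_def)
qed (simp add: hyperplane_reflection_def)

lemma odd_sphere_map_homotopic_equator_preserving:
  fixes F :: "'a::real_inner \<Rightarrow> 'a"
  assumes T: "subspace T" and e: "e \<in> T" "norm e = 1"
    and contF: "continuous_on (sphere 0 1 \<inter> T) F" and F: "F \<in> sphere 0 1 \<inter> T \<rightarrow> sphere 0 1 \<inter> T"
    and odd_F: "\<And>y. y \<in> sphere 0 1 \<inter> T \<Longrightarrow> F (- y) = - F y"
    and no_poles: "\<And>y. y \<in> sphere 0 1 \<inter> T \<Longrightarrow> e \<bullet> y = 0 \<Longrightarrow> F y \<noteq> e \<and> F y \<noteq> - e"
  obtains G where "homotopic_with_canon (\<lambda>_. True) (sphere 0 1 \<inter> T) (sphere 0 1 \<inter> T) F G"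
    "\<And>y. y \<in> sphere 0 1 \<inter> T \<Longrightarrow> G (- y) = - G y"
    "\<And>y. y \<in> sphere 0 1 \<inter> T \<Longrightarrow> e \<bullet> y = 0 \<Longrightarrow> e \<bullet> G y = 0"
proof -
  let ?S = "sphere 0 1 \<inter> T"
  define c where "c y = e \<bullet> F y" for y
  define q where "q y = (norm (F y - c y *\<^sub>R e))\<^sup>2" for y
  define t where "t y = q y / (q y + (e \<bullet> y)\<^sup>2)" for y
  define g where "g y = F y - (t y * c y) *\<^sub>R e" for y
  \<comment> \<open>g shrinks the e-component of F, and kills it exactly on the equator, where t = 1\<close>
  have ee: "e \<bullet> e = 1"
    using e(2) by (simp add: dot_square_norm)
  have perp: "e \<bullet> (F y - c y *\<^sub>R e) = 0" for y
    by (simp add: c_def inner_diff_right ee)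
  have q_pos: "0 < q y + (e \<bullet> y)\<^sup>2" if y: "y \<in> ?S" for y
  proof (cases "e \<bullet> y = 0")
    case True
    have "F y \<noteq> c y *\<^sub>R e"
    proof
      assume Fy: "F y = c y *\<^sub>R e"
      then have "\<bar>c y\<bar> = 1"
        using F y e(2) by (metis IntE PiE mem_sphere_0 norm_scaleR mult.right_neutral)
      then show False
        using no_poles[OF y True] Fy by (auto simp: abs_if split: if_splits)
    qed
    then show ?thesis
      by (simp add: q_def True)
  qed (simp add: q_def add_nonneg_pos)
  have t_equator: "t y = 1" if "y \<in> ?S" "e \<bullet> y = 0" for y
    using q_pos[OF that(1)] that(2) by (simp add: t_def)
  have seg: "0 \<notin> closed_segment (F y) (g y)" if y: "y \<in> ?S" for y
  proof
    assume "0 \<in> closed_segment (F y) (g y)"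
    then obtain s where "(1 - s) *\<^sub>R F y + s *\<^sub>R g y = 0"
      by (auto simp: in_segment)
    then have z: "(F y - c y *\<^sub>R e) + (c y - s * t y * c y) *\<^sub>R e = 0"
      by (simp add: g_def algebra_simps)
    have "q y = (F y - c y *\<^sub>R e) \<bullet> ((F y - c y *\<^sub>R e) + (c y - s * t y * c y) *\<^sub>R e)"
      using perp[of y] by (simp add: q_def power2_norm_eq_inner inner_add_right inner_commute)
    then have "q y = 0"
      by (simp only: z inner_zero_right)
    then have "t y = 0"
      by (simp add: t_def)
    with z have "F y = 0"
      by simp
    then show False
      using funcset_mem[OF F y] by simp
  qed
  have odd_g: "g (- y) = - g y" if "y \<in> ?S" for y
    using odd_F[OF that] by (simp add: g_def t_def q_def c_def algebra_simps norm_minus_commute)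
  have cont_c: "continuous_on ?S c"
    unfolding c_def by (intro continuous_intros contF)
  have cont_q: "continuous_on ?S q"
    unfolding q_def by (intro continuous_intros contF cont_c)
  have cont_t: "continuous_on ?S t"
    unfolding t_def using q_pos by (intro continuous_intros cont_q) force
  have cont_g: "continuous_on ?S g"
    unfolding g_def by (intro continuous_intros contF cont_c cont_t)
  have gT: "g \<in> ?S \<rightarrow> T"
    using F e(1) by (auto simp: g_def intro!: subspace_diff subspace_scale T)
  show thesis
  proof
    show "homotopic_with_canon (\<lambda>_. True) ?S ?S F (\<lambda>y. g y /\<^sub>R norm (g y))"
      by (rule homotopic_with_normalized_segment[OF T contF cont_g F gT seg])
    show "g (- y) /\<^sub>R norm (g (- y)) = - (g y /\<^sub>R norm (g y))" if "y \<in> ?S" for y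
      by (simp add: odd_g[OF that])
    show "e \<bullet> (g y /\<^sub>R norm (g y)) = 0" if "y \<in> ?S" "e \<bullet> y = 0" for y
      using t_equator[OF that] by (simp add: g_def c_def inner_diff_right ee)
  qed
qed

lemma odd_coord_sphere_map_avoiding_pole:
  fixes F :: "real^'n::finite \<Rightarrow> real^'n" and m :: nat
  defines "S \<equiv> sphere 0 1 \<inter> coord_subspace (Suc m)" and "e \<equiv> axis (nth_elem (Suc m)) 1"
  assumes m: "Suc m < CARD('n)"
    and contF: "continuous_on S F" and F: "F \<in> S \<rightarrow> S" and odd_F: "\<And>y. y \<in> S \<Longrightarrow> F (- y) = - F y"
  obtains G R where "homotopic_with_canon (\<lambda>_. True) S S F G" "\<And>y. G (- y) = - G y"
    "continuous_on S R" "R \<in> S \<rightarrow> S" "\<And>y. R (- y) = - R y"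
    "\<And>y. y \<in> sphere 0 1 \<inter> coord_subspace m \<Longrightarrow> R (G y) \<noteq> e"
proof -
  let ?E = "sphere 0 1 \<inter> coord_subspace m :: (real^'n) set"
  have ES: "?E \<subseteq> S"
    using coord_subspace_mono[of m "Suc m"] by (auto simp: S_def)
  have "compact S"
    by (simp add: S_def closed_subspace compact_Int_closed subspace_coord_subspace)
  moreover have "\<And>y. y \<in> S \<Longrightarrow> - y \<in> S"
    by (simp add: S_def subspace_neg subspace_coord_subspace)
  ultimately obtain G where G_diff: "G differentiable_on S" and odd_G: "\<And>y. G (- y) = - G y"
    and FG: "homotopic_with_canon (\<lambda>_. True) S S F G"
    using odd_sphere_map_homotopic_differentiable[OF _ _ subspace_coord_subspace contF _ odd_F] F
    unfolding S_def by metis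
  \<comment> \<open>Sard: a smooth map from a lower-dimensional sphere misses some point w\<close>
  have "G ` ?E \<noteq> S"
    unfolding S_def using m ES G_diff
    by (intro spheremap_lemma1 subspace_coord_subspace dim_coord_subspace_less coord_subspace_mono)
       (auto simp: S_def intro: differentiable_on_subset)
  moreover have "G ` ?E \<subseteq> S"
    using homotopic_with_imp_funspace2[OF FG] ES by auto
  ultimately obtain w where w: "w \<in> S" "w \<notin> G ` ?E"
    by blast
  have e: "e \<in> S"
    using axis_in_coord_sphere[OF m] by (simp add: S_def e_def)
  define R where "R = hyperplane_reflection (w - e)"
  have Rw: "R w = e"
    using w(1) e by (simp add: R_def S_def hyperplane_reflection_swap)
  show thesis
  proof
    show "homotopic_with_canon (\<lambda>_. True) S S F G" "\<And>y. G (- y) = - G y"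
      by (fact FG odd_G)+
    show "continuous_on S R" "\<And>y. R (- y) = - R y"
      by (simp_all add: R_def continuous_on_hyperplane_reflection hyperplane_reflection_uminus)
    show "R \<in> S \<rightarrow> S"
      using w(1) e unfolding R_def S_def
      by (intro funcsetI hyperplane_reflection_in_sphere_subspace subspace_coord_subspace
          subspace_diff) auto
    show "R (G y) \<noteq> e" if "y \<in> ?E" for y
    proof
      assume "R (G y) = e"
      then have "G y = w"
        using Rw by (metis R_def hyperplane_reflection_involution)
      then show False
        using w(2) that by blast
    qed
  qed
qed

lemma odd_coord_sphere_map_reduce_to_equator:
  fixes F :: "real^'n::finite \<Rightarrow> real^'n" and m :: nat
  defines "S \<equiv> sphere 0 1 \<inter> coord_subspace (Suc m)" and "E \<equiv> sphere 0 1 \<inter> coord_subspace m"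
  assumes m: "Suc m < CARD('n)"
    and contF: "continuous_on S F" and F: "F \<in> S \<rightarrow> S" and odd_F: "\<And>y. y \<in> S \<Longrightarrow> F (- y) = - F y"
  obtains G R H where "homotopic_with_canon (\<lambda>_. True) S S F G"
    "continuous_on S R" "R \<in> S \<rightarrow> S" "homotopic_with_canon (\<lambda>_. True) S S (R \<circ> G) H"
    "\<And>y. y \<in> S \<Longrightarrow> H (- y) = - H y" "H \<in> E \<rightarrow> E"
proof -
  let ?e = "axis (nth_elem (Suc m)) 1 :: real^'n"
  obtain G R where FG: "homotopic_with_canon (\<lambda>_. True) S S F G" and odd_G: "\<And>y. G (- y) = - G y"
    and contR: "continuous_on S R" and R: "R \<in> S \<rightarrow> S" and odd_R: "\<And>y. R (- y) = - R y"
    and avoid: "\<And>y. y \<in> E \<Longrightarrow> R (G y) \<noteq> ?e"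
    using odd_coord_sphere_map_avoiding_pole[OF m, where F=F, folded S_def E_def, OF contF F odd_F]
    by blast
  have equator: "y \<in> E \<longleftrightarrow> y \<in> S \<and> ?e \<bullet> y = 0" for y
    using coord_subspace_Suc[OF m] by (auto simp: S_def E_def inner_axis')
  have G: "G \<in> S \<rightarrow> S" and contG: "continuous_on S G"
    using homotopic_with_imp_continuous_maps[OF FG] by auto
  have neg_S: "- y \<in> S" if "y \<in> S" for y
    using that by (simp add: S_def subspace_neg subspace_coord_subspace)
  obtain H where RGH: "homotopic_with_canon (\<lambda>_. True) S S (R \<circ> G) H"
    and odd_H: "\<And>y. y \<in> S \<Longrightarrow> H (- y) = - H y"
    and H_equator: "\<And>y. y \<in> S \<Longrightarrow> ?e \<bullet> y = 0 \<Longrightarrow> ?e \<bullet> H y = 0"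
  proof (rule odd_sphere_map_homotopic_equator_preserving[of "coord_subspace (Suc m)" ?e "R \<circ> G",
        folded S_def])
    show "subspace (coord_subspace (Suc m))"
      by (rule subspace_coord_subspace)
    show "?e \<in> coord_subspace (Suc m)" "norm ?e = 1"
      using axis_in_coord_sphere[OF m] by auto
    show "continuous_on S (R \<circ> G)"
      by (rule continuous_on_compose[OF contG continuous_on_subset[OF contR]]) (use G in auto)
    show "R \<circ> G \<in> S \<rightarrow> S"
      using G R by auto
    show "(R \<circ> G) (- y) = - (R \<circ> G) y" for y
      by (simp add: odd_G odd_R)
    show "(R \<circ> G) y \<noteq> ?e \<and> (R \<circ> G) y \<noteq> - ?e" if "y \<in> S" "?e \<bullet> y = 0" for y
    proof -
      have "y \<in> E" "- y \<in> E"
        using that neg_S[OF that(1)] by (auto simp: equator)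
      then show ?thesis
        using avoid[of y] avoid[of "- y"] by (auto simp: odd_G odd_R)
    qed
  qed blast
  have "H \<in> E \<rightarrow> E"
    using homotopic_with_imp_funspace2[OF RGH] H_equator by (auto simp: equator)
  with FG contR R RGH odd_H show thesis
    by (rule that)
qed

section \<open>Odd maps have odd degree; the Borsuk--Ulam theorem\<close>

text \<open>The type \<open>'n\<close> only supplies a Euclidean space \<open>real^'n\<close> of dimension \<open>> k\<close>, in which
  the maps are smoothed.\<close>

theorem odd_Brouwer_degree2_of_odd_map:
  assumes "k < CARD('n::finite)"
    and "continuous_map (nsphere k) (nsphere k) f"
    and "\<And>x. x \<in> std_sphere k \<Longrightarrow> f (- x) = - f x"
  shows "odd (Brouwer_degree2 k f)"
  using assms
proof (induction k arbitrary: f)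
  case 0
  then show ?case
    by (intro odd_Brouwer_degree2_of_odd_map_0) auto
next
  case (Suc m)
  let ?S = "sphere 0 1 \<inter> coord_subspace (Suc m) :: (real^'n) set"
  let ?E = "sphere 0 1 \<inter> coord_subspace m :: (real^'n) set"
  have m: "m < CARD('n)"
    using Suc.prems(1) by simp
  obtain F :: "real^'n \<Rightarrow> real^'n" where contF: "continuous_on ?S F" and F: "F \<in> ?S \<rightarrow> ?S"
    and odd_F: "\<And>y. y \<in> ?S \<Longrightarrow> F (- y) = - F y"
    and f_eq: "\<And>x. x \<in> std_sphere (Suc m) \<Longrightarrow> seq_map F x = f x"
    using odd_nsphere_map_eq_seq_map[OF Suc.prems] by blast
  obtain G R H where FG: "homotopic_with_canon (\<lambda>_. True) ?S ?S F G"
    and contR: "continuous_on ?S R" and R: "R \<in> ?S \<rightarrow> ?S"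
    and RGH: "homotopic_with_canon (\<lambda>_. True) ?S ?S (R \<circ> G) H"
    and odd_H: "\<And>y. y \<in> ?S \<Longrightarrow> H (- y) = - H y" and H: "H \<in> ?E \<rightarrow> ?E"
    using odd_coord_sphere_map_reduce_to_equator[OF Suc.prems(1) contF F odd_F] by blast
  let ?h = "seq_map H"
  have homG: "homotopic_with (\<lambda>_. True) (nsphere (Suc m)) (nsphere (Suc m)) (seq_map F) (seq_map G)"
    by (rule homotopic_seq_map[OF Suc.prems(1) FG])
  have homH: "homotopic_with (\<lambda>_. True) (nsphere (Suc m)) (nsphere (Suc m)) (seq_map (R \<circ> G)) ?h"
    by (rule homotopic_seq_map[OF Suc.prems(1) RGH])
  have h: "continuous_map (nsphere (Suc m)) (nsphere (Suc m)) ?h"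
    using homotopic_with_imp_continuous_maps[OF homH] by simp
  have odd_h: "?h (- x) = - ?h x" if "x \<in> std_sphere (Suc m)" for x
    using Suc.prems(1) odd_H that by (rule seq_map_uminus)
  have h_equator: "?h \<in> std_sphere m \<rightarrow> std_sphere m"
    by (rule seq_map_in_std_sphere[OF m H])
  have "odd (Brouwer_degree2 m ?h)"
  proof (rule Suc.IH[OF m])
    show "continuous_map (nsphere m) (nsphere m) ?h"
      using h h_equator std_sphere_mono
      by (auto simp: continuous_map_nsphere_iff intro: continuous_on_subset)
    show "?h (- x) = - ?h x" if "x \<in> std_sphere m" for x
      using odd_h std_sphere_mono that by blast
  qed
  moreover have "even (Brouwer_degree2 (Suc m) ?h - Brouwer_degree2 (Suc m - Suc 0) ?h)"
    by (rule Borsuk_odd_mapping_degree_step[OF h])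
       (use odd_h h_equator in \<open>auto simp: fun_Compl_def\<close>)
  ultimately have "odd (Brouwer_degree2 (Suc m) ?h)"
    by simp
  moreover have "Brouwer_degree2 (Suc m) ?h = Brouwer_degree2 (Suc m) (seq_map R \<circ> seq_map G)"
    using Brouwer_degree2_homotopic[OF homH] by (simp add: seq_map_compose)
  moreover have "\<dots> = Brouwer_degree2 (Suc m) (seq_map R) * Brouwer_degree2 (Suc m) (seq_map G)"
    using homotopic_with_imp_continuous_maps[OF homG]
      continuous_map_seq_map[OF Suc.prems(1) contR R]
    by (intro Brouwer_degree2_compose) auto
  moreover have "Brouwer_degree2 (Suc m) (seq_map G) = Brouwer_degree2 (Suc m) f"
    using Brouwer_degree2_homotopic[OF homG] Brouwer_degree2_eq[of "Suc m" "seq_map F" f] f_eq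
    by simp
  ultimately show ?case
    by simp
qed

lemma coord_subspace_top: "coord_subspace (CARD('n::finite) - 1) = (UNIV :: (real^'n) set)"
proof -
  have "\<not> CARD('n) - 1 < elem_index (j :: 'n)" for j
    using elem_index_less[of j] by linarith
  then show ?thesis
    by (auto simp: coord_subspace_def)
qed

theorem Borsuk_Ulam:
  fixes g :: "real^'n::finite \<Rightarrow> real^'n"
  assumes cont: "continuous_on (sphere 0 1) g" and odd_g: "\<And>x. x \<in> sphere 0 1 \<Longrightarrow> g (- x) = - g x"
    and flat: "\<And>x. x \<in> sphere 0 1 \<Longrightarrow> g x $ a = 0"
  obtains x where "x \<in> sphere 0 1" "g x = 0"
proof (rule ccontr)
  note zero_found = that
  assume no_zero: "\<not> thesis"
  define k where "k = CARD('n) - 1"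
  have k: "k < CARD('n)"
    by (simp add: k_def)
  have S: "sphere 0 1 \<inter> coord_subspace k = (sphere 0 1 :: (real^'n) set)"
    by (simp only: k_def coord_subspace_top Int_UNIV_right)
  have nz: "g x \<noteq> 0" if "x \<in> sphere 0 1" for x
    using no_zero zero_found that by blast
  define G where "G y = g y /\<^sub>R norm (g y)" for y
  have contG: "continuous_on (sphere 0 1) G"
    unfolding G_def using nz by (intro continuous_intros cont) auto
  have G: "G \<in> sphere 0 1 \<rightarrow> sphere 0 1"
    using nz by (simp add: G_def)
  have h: "continuous_map (nsphere k) (nsphere k) (seq_map G)"
    by (rule continuous_map_seq_map[OF k]) (simp_all only: S contG G)
  have "odd (Brouwer_degree2 k (seq_map G))"
  proof (rule odd_Brouwer_degree2_of_odd_map[OF k h])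
    show "seq_map G (- x) = - seq_map G x" if "x \<in> std_sphere k" for x
      using vec_of_seq_in_sphere[OF that k] odd_g
      by (simp add: seq_map_def G_def vec_of_seq_uminus seq_of_vec_uminus S)
  qed
  moreover have "Brouwer_degree2 k (seq_map G) = 0"
  proof (rule Brouwer_degree2_nonsurjective[OF h])
    have "seq_of_vec (axis a 1) \<in> std_sphere k"
      using seq_of_vec_in_std_sphere[OF _ k] by (simp add: S)
    moreover have "seq_of_vec (axis a 1) \<notin> seq_map G ` std_sphere k"
    proof
      assume "seq_of_vec (axis a 1) \<in> seq_map G ` std_sphere k"
      then obtain x where x: "x \<in> std_sphere k"
        "seq_of_vec (axis a 1) = seq_of_vec (G (vec_of_seq x))"
        by (auto simp: seq_map_def)
      then have "axis a 1 = G (vec_of_seq x)"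
        by (metis vec_of_seq_seq_of_vec)
      then have "1 = G (vec_of_seq x) $ a"
        by (metis axis_nth)
      then show False
        using flat vec_of_seq_in_sphere[OF x(1) k] by (simp add: G_def S)
    qed
    ultimately show "seq_map G ` topspace (nsphere k) \<noteq> topspace (nsphere k)"
      by auto
  qed
  ultimately show False
    by simp
qed

section \<open>The genus of the \<open>p\<close>-sphere\<close>

lemma pnorm_p_scaleR: "pnorm_p p (c *\<^sub>R x) = \<bar>c\<bar> powr p * pnorm_p p x"
  by (simp add: pnorm_p_def abs_mult powr_mult sum_distrib_left)

lemma pnorm_p_uminus [simp]: "pnorm_p p (- x) = pnorm_p p x"
  by (simp add: pnorm_p_def)

lemma pnorm_p_pos: "x \<noteq> 0 \<Longrightarrow> 0 < pnorm_p p x"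
proof -
  assume "x \<noteq> 0"
  then obtain j where "x $ j \<noteq> 0"
    by (auto simp: vec_eq_iff)
  then have "0 < \<bar>x $ j\<bar> powr p"
    by simp
  also have "\<dots> \<le> pnorm_p p x"
    unfolding pnorm_p_def by (rule member_le_sum) auto
  finally show ?thesis .
qed

lemma continuous_on_pnorm_p: "0 < p \<Longrightarrow> continuous_on S (pnorm_p p)"
  unfolding pnorm_p_def by (intro continuous_on_sum continuous_on_powr' continuous_intros) auto

lemma sphere_p_nonzero: "x \<in> sphere_p p \<Longrightarrow> x \<noteq> 0"
  by (auto simp: sphere_p_def pnorm_p_def)

lemma uminus_in_sphere_p: "x \<in> sphere_p p \<Longrightarrow> - x \<in> sphere_p p"
  by (simp add: sphere_p_def)

lemma closed_sphere_p: "0 < p \<Longrightarrow> closed (sphere_p p)"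
  unfolding sphere_p_def by (rule closed_Collect_eq[OF continuous_on_pnorm_p continuous_on_const])

lemma normalized_in_sphere_p:
  assumes "0 < p" "y \<noteq> 0"
  shows "pnorm_p p y powr (-1/p) *\<^sub>R y \<in> sphere_p p"
proof -
  have "pnorm_p p (pnorm_p p y powr (-1/p) *\<^sub>R y) = pnorm_p p y powr (-1) * pnorm_p p y"
    using assms(1) pnorm_p_pos[OF assms(2)] by (simp add: pnorm_p_scaleR powr_powr)
  also have "\<dots> = 1"
    using pnorm_p_pos[OF assms(2), of p] by (simp add: powr_minus)
  finally show ?thesis
    by (simp add: sphere_p_def)
qed

lemma abs_component_le_1_sphere_p:
  assumes "0 < p" "x \<in> sphere_p p"
  shows "\<bar>x $ i\<bar> \<le> 1"
proof (rule ccontr)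
  assume "\<not> \<bar>x $ i\<bar> \<le> 1"
  then have "1 powr p < \<bar>x $ i\<bar> powr p"
    using assms(1) by (intro powr_less_mono2) auto
  also have "\<dots> \<le> pnorm_p p x"
    unfolding pnorm_p_def by (rule member_le_sum) auto
  finally show False
    using assms(2) by (simp add: sphere_p_def)
qed

lemma genus_le: "odd_map_to B k \<Longrightarrow> genus B \<le> k"
  unfolding genus_def by (rule Least_le)

lemma odd_map_to_sphere_p_card: "odd_map_to (sphere_p p :: (real^'n::finite) set) CARD('n)"
  unfolding odd_map_to_def
proof (intro exI[of _ "\<lambda>x i. x $ nth_elem i"] conjI ballI allI impI)
  fix x :: "real^'n" assume "x \<in> sphere_p p"
  then obtain j where "x $ j \<noteq> 0"
    using sphere_p_nonzero by (auto simp: vec_eq_iff)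
  then show "\<exists>i<CARD('n). x $ nth_elem i \<noteq> 0"
    by (intro exI[of _ "elem_index j"]) (simp add: elem_index_less)
qed (auto intro: continuous_intros)

lemma not_odd_map_to_sphere_p:
  assumes p: "0 < p" and j: "j < CARD('n::finite)"
  shows "\<not> odd_map_to (sphere_p p :: (real^'n) set) j"
proof
  assume "odd_map_to (sphere_p p :: (real^'n) set) j"
  then obtain g :: "real^'n \<Rightarrow> nat \<Rightarrow> real"
    where cont_g: "\<And>i. i < j \<Longrightarrow> continuous_on (sphere_p p) (\<lambda>x. g x i)"
      and odd_g: "\<And>x i. x \<in> sphere_p p \<Longrightarrow> i < j \<Longrightarrow> g (- x) i = - g x i"
      and nz_g: "\<And>x. x \<in> sphere_p p \<Longrightarrow> \<exists>i<j. g x i \<noteq> 0"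
    unfolding odd_map_to_def by blast
  define \<psi> :: "real^'n \<Rightarrow> real^'n" where "\<psi> y = pnorm_p p y powr (-1/p) *\<^sub>R y" for y
  have \<psi>: "\<psi> y \<in> sphere_p p" if "y \<in> sphere 0 1" for y
    unfolding \<psi>_def using that by (intro normalized_in_sphere_p p) auto
  have "pnorm_p p y \<noteq> 0" if "y \<in> sphere 0 1" for y :: "real^'n"
    using that pnorm_p_pos[of y p] by force
  then have cont_\<psi>: "continuous_on (sphere 0 1) \<psi>"
    unfolding \<psi>_def by (intro continuous_intros continuous_on_pnorm_p p) auto
  define G :: "real^'n \<Rightarrow> real^'n" where
    "G y = (\<chi> c. if elem_index c < j then g (\<psi> y) (elem_index c) else 0)" for y
  obtain y where y: "y \<in> sphere 0 1" "G y = 0"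
  proof (rule Borsuk_Ulam[of G "nth_elem (CARD('n) - 1)"])
    show "continuous_on (sphere 0 1) G"
      unfolding G_def
    proof (intro continuous_on_vec_lambda)
      fix c :: 'n
      have "continuous_on (sphere 0 1) (\<lambda>y. g (\<psi> y) (elem_index c))" if "elem_index c < j"
        using \<psi> by (intro continuous_on_compose2[OF cont_g[OF that] cont_\<psi>]) auto
      then show "continuous_on (sphere 0 1)
          (\<lambda>y. if elem_index c < j then g (\<psi> y) (elem_index c) else 0)"
        by (cases "elem_index c < j") auto
    qed
    show "G (- y) = - G y" if "y \<in> sphere 0 1" for y
      using odd_g[OF uminus_in_sphere_p[OF \<psi>[OF that]]]
      by (simp add: G_def \<psi>_def vec_eq_iff)
    show "G y $ nth_elem (CARD('n) - 1) = 0" for y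
      using j by (simp add: G_def)
  qed
  obtain i where "i < j" "g (\<psi> y) i \<noteq> 0"
    using nz_g[OF \<psi>[OF y(1)]] by blast
  then have "G y $ nth_elem i \<noteq> 0"
    using j by (simp add: G_def)
  then show False
    using y(2) by simp
qed

lemma genus_sphere_p:
  assumes "0 < p"
  shows "genus (sphere_p p :: (real^'n::finite) set) = CARD('n)"
proof (rule antisym)
  show "genus (sphere_p p :: (real^'n) set) \<le> CARD('n)"
    by (rule genus_le[OF odd_map_to_sphere_p_card])
  have "odd_map_to (sphere_p p :: (real^'n) set) (genus (sphere_p p :: (real^'n) set))"
    unfolding genus_def by (rule LeastI[of _ "CARD('n)"]) (rule odd_map_to_sphere_p_card)
  then show "CARD('n) \<le> genus (sphere_p p :: (real^'n) set)"
    using not_odd_map_to_sphere_p[OF assms] not_le by blast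
qed

lemma sphere_p_in_genus_family:
  "0 < p \<Longrightarrow> k \<le> CARD('n::finite) \<Longrightarrow> (sphere_p p :: (real^'n) set) \<in> genus_family p k"
  by (simp add: genus_family_def symmetric_set_def closed_sphere_p genus_sphere_p
      uminus_in_sphere_p)

section \<open>Min-max eigenvalues\<close>

lemma bdd_above_rayleigh:
  assumes sg: "signed_graph E \<sigma>" and p: "0 < p" and B: "B \<subseteq> sphere_p p"
  shows "bdd_above (rayleigh E \<sigma> p ` (B :: (real^'n::finite) set))"
proof (rule bdd_aboveI2)
  fix f assume "f \<in> B"
  then have f: "f \<in> sphere_p p"
    using B by auto
  have term_le: "(if {i, j} \<in> E then \<bar>f $ i - \<sigma> {i, j} * f $ j\<bar> powr p else 0) \<le> 2 powr p" for i j
  proof (cases "{i, j} \<in> E")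
    case True
    then have "\<bar>\<sigma> {i, j}\<bar> = 1"
      using sg by (auto simp: signed_graph_def)
    then have "\<bar>f $ i - \<sigma> {i, j} * f $ j\<bar> \<le> 2"
      using abs_component_le_1_sphere_p[OF p f, of i] abs_component_le_1_sphere_p[OF p f, of j]
      by (simp add: abs_mult abs_triangle_ineq4 order_trans[OF abs_triangle_ineq4])
    then show ?thesis
      using True p by (simp add: powr_mono2)
  qed simp
  have "rayleigh E \<sigma> p f = edge_energy E \<sigma> p f"
    using f by (simp add: rayleigh_def sphere_p_def)
  also have "\<dots> \<le> (1/2) * (\<Sum>i\<in>(UNIV::'n set). \<Sum>j\<in>(UNIV::'n set). 2 powr p)"
    unfolding edge_energy_def by (intro mult_left_mono sum_mono term_le) auto
  finally show "rayleigh E \<sigma> p f \<le> (1/2) * (\<Sum>i\<in>(UNIV::'n set). \<Sum>j\<in>(UNIV::'n set). 2 powr p)" .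
qed

lemma genus_family_meets_line:
  assumes B: "B \<in> genus_family p CARD('n::finite)" and v: "v $ a = 1"
  shows "\<exists>c. c *\<^sub>R v \<in> (B :: (real^'n) set)"
proof (rule ccontr)
  assume off_line: "\<nexists>c. c *\<^sub>R v \<in> B"
  obtain d where d: "bij_betw d {..<CARD('n) - 1} (UNIV - {a})"
    using ex_bij_betw_nat_finite[of "UNIV - {a} :: 'n set"]
    by (auto simp: atLeast0LessThan card_Diff_singleton)
  \<comment> \<open>the coordinates of x - x_a v off a vanish only on the line through v\<close>
  define g where "g x i = x $ d i - v $ d i * x $ a" for x :: "real^'n" and i
  have "odd_map_to B (CARD('n) - 1)"
    unfolding odd_map_to_def
  proof (intro exI[of _ g] conjI ballI allI impI)
    show "continuous_on B (\<lambda>x. g x i)" for i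
      unfolding g_def by (intro continuous_intros)
    show "g (- x) i = - g x i" for x i
      by (simp add: g_def)
    fix x assume x: "x \<in> B"
    show "\<exists>i<CARD('n) - 1. g x i \<noteq> 0"
    proof (rule ccontr)
      assume all_zero: "\<not> (\<exists>i<CARD('n) - 1. g x i \<noteq> 0)"
      have "x $ j = (x $ a *\<^sub>R v) $ j" for j
      proof (cases "j = a")
        case False
        then have "j \<in> d ` {..<CARD('n) - 1}"
          using d by (simp add: bij_betw_def)
        then obtain i where "i < CARD('n) - 1" "j = d i"
          by auto
        then show ?thesis
          using all_zero by (simp add: g_def mult.commute)
      qed (simp add: v)
      then have "x = x $ a *\<^sub>R v"
        unfolding vec_eq_iff by blast
      then show False
        using off_line x by metis
    qed
  qed
  then have "genus B \<le> CARD('n) - 1"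
    by (rule genus_le)
  moreover have "CARD('n) \<le> genus B"
    using B by (simp add: genus_family_def)
  ultimately show False
    using finite_UNIV_card_ge_0[OF finite[of "UNIV :: 'n set"]] by linarith
qed

lemma rayleigh_edge_dipole:
  fixes E :: "'n::finite set set" and \<sigma> :: "'n set \<Rightarrow> real" and a b :: 'n
  defines "v \<equiv> \<chi> j. if j = a then 1 else if j = b then - \<sigma> {a, b} else 0"
  assumes sg: "signed_graph E \<sigma>" and ab: "a \<noteq> b" "{a, b} \<in> E" and x: "c *\<^sub>R v \<in> sphere_p p"
  shows "2 powr (p - 1) \<le> rayleigh E \<sigma> p (c *\<^sub>R v)"
proof -
  let ?x = "c *\<^sub>R v" and ?s = "\<sigma> {a, b}"
  have s: "?s = 1 \<or> ?s = -1"
    using sg ab by (auto simp: signed_graph_def)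
  have "pnorm_p p v = 2"
  proof -
    have "\<bar>v $ j\<bar> powr p = (if j = a then 1 else 0) + (if j = b then 1 else 0)" for j
      using ab(1) s by (auto simp: v_def)
    then show ?thesis
      by (simp add: pnorm_p_def sum.distrib)
  qed
  then have "\<bar>c\<bar> powr p = 1/2"
    using x by (simp add: sphere_p_def pnorm_p_scaleR)
  then have term_ab: "\<bar>2 * c\<bar> powr p = 2 powr p / 2"
    by (simp add: abs_mult powr_mult)
  define T where "T i j = (if {i, j} \<in> E then \<bar>?x $ i - \<sigma> {i, j} * ?x $ j\<bar> powr p else 0)" for i j
  have T_nonneg: "0 \<le> T i j" for i j
    by (simp add: T_def)
  have "T a b = 2 powr p / 2" "T b a = 2 powr p / 2"
    using ab s term_ab by (auto simp: T_def v_def insert_commute abs_minus_commute)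
  then have "2 powr p \<le> T a b + T b a"
    by simp
  also have "\<dots> \<le> (\<Sum>j\<in>UNIV. T a j) + (\<Sum>j\<in>UNIV. T b j)"
    by (intro add_mono member_le_sum) (auto simp: T_nonneg)
  also have "\<dots> = (\<Sum>i\<in>{a, b}. \<Sum>j\<in>UNIV. T i j)"
    using ab(1) by simp
  also have "\<dots> \<le> (\<Sum>i\<in>UNIV. \<Sum>j\<in>UNIV. T i j)"
    by (rule sum_mono2) (auto intro: sum_nonneg T_nonneg)
  finally have "2 powr p / 2 \<le> edge_energy E \<sigma> p ?x"
    by (simp add: edge_energy_def T_def)
  then show ?thesis
    using x by (simp add: rayleigh_def sphere_p_def powr_diff)
qed

lemma p_eigenvalue_card_ge:
  fixes E :: "'n::finite set set" and \<sigma> :: "'n set \<Rightarrow> real"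
  assumes sg: "signed_graph E \<sigma>" and ab: "a \<noteq> b" "{a, b} \<in> E" and p: "0 < p"
  shows "2 powr (p - 1) \<le> p_eigenvalue E \<sigma> p CARD('n)"
  unfolding p_eigenvalue_def
proof (rule cINF_greatest)
  show "genus_family p CARD('n) \<noteq> ({} :: (real^'n) set set)"
    using sphere_p_in_genus_family[OF p order_refl] by blast
  fix B :: "(real^'n) set"
  assume B: "B \<in> genus_family p CARD('n)"
  let ?v = "\<chi> j. if j = a then 1 else if j = b then - \<sigma> {a, b} else 0 :: real^'n"
  obtain c where c: "c *\<^sub>R ?v \<in> B"
    using genus_family_meets_line[OF B, of ?v a] by auto
  have "B \<subseteq> sphere_p p"
    using B by (simp add: genus_family_def)
  then show "2 powr (p - 1) \<le> (SUP f\<in>B. rayleigh E \<sigma> p f)"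
    using c rayleigh_edge_dipole[OF sg ab]
    by (intro cSUP_upper2[OF bdd_above_rayleigh[OF sg p]]) auto
qed

text \<open>For \<open>k = 0\<close> the empty set is admissible and the supremum over it is the junk value
  \<open>Sup {}\<close>; hence \<open>1 \<le> k\<close>.\<close>

lemma p_eigenvalue_no_edges:
  fixes \<sigma> :: "'n::finite set \<Rightarrow> real"
  assumes "0 < p" "1 \<le> k" "k \<le> CARD('n)"
  shows "p_eigenvalue {} \<sigma> p k = 0"
proof -
  have "odd_map_to ({} :: (real^'n) set) 0"
    by (simp add: odd_map_to_def)
  then have "genus ({} :: (real^'n) set) = 0"
    using genus_le by fastforce
  then have "B \<noteq> {}" if "B \<in> (genus_family p k :: (real^'n) set set)" for B
    using that assms(2) by (auto simp: genus_family_def)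
  then have "(SUP f\<in>B. rayleigh {} \<sigma> p f) = 0"
    if "B \<in> (genus_family p k :: (real^'n) set set)" for B
    using that by (simp add: rayleigh_def edge_energy_def)
  moreover have "genus_family p k \<noteq> ({} :: (real^'n) set set)"
    using sphere_p_in_genus_family[OF assms(1,3)] by blast
  ultimately show ?thesis
    unfolding p_eigenvalue_def by (simp add: cINF_const)
qed

lemma eventually_scaled_p_eigenvalue_card_ge:
  fixes E :: "'n::finite set set" and \<sigma> :: "'n set \<Rightarrow> real"
  assumes "signed_graph E \<sigma>" "a \<noteq> b" "{a, b} \<in> E"
  shows "\<forall>\<^sub>F p in at_top. 1/2 \<le> 2 powr (-p) * p_eigenvalue E \<sigma> p CARD('n)"
proof (rule eventually_mono[OF eventually_gt_at_top[of 0]])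
  fix p :: real assume "0 < p"
  have "(1/2 :: real) = 2 powr (-p) * 2 powr (p - 1)"
    by (simp add: powr_diff powr_minus)
  also have "\<dots> \<le> 2 powr (-p) * p_eigenvalue E \<sigma> p CARD('n)"
    using \<open>0 < p\<close> by (intro mult_left_mono p_eigenvalue_card_ge[OF assms]) auto
  finally show "1/2 \<le> 2 powr (-p) * p_eigenvalue E \<sigma> p CARD('n)" .
qed

theorem theorem8p3:
  fixes E :: "'n::finite set set" and \<sigma> :: "'n set \<Rightarrow> real"
  assumes "signed_graph E \<sigma>"
  shows "(\<forall>k\<in>{1..CARD('n)}.
            ((\<lambda>p::real. 2 powr (-p) * p_eigenvalue E \<sigma> p k) \<longlongrightarrow> 0) at_top)
         \<longleftrightarrow> E = {}"
proof
  assume lim: "\<forall>k\<in>{1..CARD('n)}. ((\<lambda>p::real. 2 powr (-p) * p_eigenvalue E \<sigma> p k) \<longlongrightarrow> 0) at_top"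
  show "E = {}"
  proof (rule ccontr)
    assume "E \<noteq> {}"
    then obtain e where "e \<in> E"
      by blast
    then obtain a b where ab: "a \<noteq> b" "{a, b} \<in> E"
      using assms by (auto simp: signed_graph_def)
    have "((\<lambda>p::real. 2 powr (-p) * p_eigenvalue E \<sigma> p CARD('n)) \<longlongrightarrow> 0) at_top"
      using lim by (simp add: Suc_leI)
    then have "1/2 \<le> (0::real)"
      using eventually_scaled_p_eigenvalue_card_ge[OF assms ab] by (rule tendsto_lowerbound) simp
    then show False
      by simp
  qed
next
  assume "E = {}"
  show "\<forall>k\<in>{1..CARD('n)}. ((\<lambda>p::real. 2 powr (-p) * p_eigenvalue E \<sigma> p k) \<longlongrightarrow> 0) at_top"
  proof
    fix k assume "k \<in> {1..CARD('n)}"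
    then have "\<forall>\<^sub>F p in at_top. 2 powr (-p) * p_eigenvalue E \<sigma> p k = 0"
      by (intro eventually_mono[OF eventually_gt_at_top[of 0]])
         (simp add: \<open>E = {}\<close> p_eigenvalue_no_edges)
    then show "((\<lambda>p::real. 2 powr (-p) * p_eigenvalue E \<sigma> p k) \<longlongrightarrow> 0) at_top"
      by (rule tendsto_eventually)
  qed
qed

end
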